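(* Let $C$ be a set of concepts over $\{0,1\}^n$, let $S\subseteq\{0,1\}^n$ with $|S|=d$ be a set shattered by $C$. Let $\mathcal{N}$ be a quantum network with quantum membership oracle gates such that for every $c\in C$, if the oracle gates of $\mathcal{N}$ are $QMQ_c$ gates, then with probability at least $2/3$ the output of $\mathcal{N}$ is a representation of a Boolean circuit $h$ whose relative distance from $c$ on $S$ is at most $1/10$. Then the query complexity of $\mathcal{N}$ is at least $\frac{d}{12n}$.
   Context: A set $S\subseteq\{0,1\}^n$ is shattered by $C$ if for every $U\subseteq S$ there is $c\in C$ with $\{x\in S: c(x)=1\}=U$. The relative distance of Boolean functions $h$ and $c$ on $S$ is the fraction of points of $S$ on which they disagree. A quantum network on an $m$-qubit register is a sequence $U_0,O_1,U_1,\dots,O_T,U_T$ of unitaries applied to $|0^m\rangle$, the $U_i$ arbitrary fixed unitaries and each $O_i$ an oracle gate, followed by a computational-basis measurement of some qubits whose outcome is the output; $T$ is the query complexity. The gate $QMQ_c$ maps basis state $|x,b,y\rangle$ ($x\in\{0,1\}^n$, $b\in\{0,1\}$) to $|x,b\oplus c(x),y\rangle$. *)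

theory Defs
  imports Complex_Main "Jordan_Normal_Form.Matrix"
begin

text \<open>Points of the cube are bool lists of length n; concepts are Boolean functions on them.\<close>

definition shattered :: "(bool list \<Rightarrow> bool) set \<Rightarrow> bool list set \<Rightarrow> bool" where
  "shattered C S \<longleftrightarrow> (\<forall>U\<subseteq>S. \<exists>c\<in>C. {x\<in>S. c x} = U)"

definition rel_dist :: "bool list set \<Rightarrow> (bool list \<Rightarrow> bool) \<Rightarrow> (bool list \<Rightarrow> bool) \<Rightarrow> real" where
  "rel_dist S h c = real (card {x\<in>S. h x \<noteq> c x}) / real (card S)"

text \<open>Register of m qubits: computational basis state with index i < 2^m;
  qubit k of basis state i is bit k of i.\<close>

definition qubit :: "nat \<Rightarrow> nat \<Rightarrow> bool" where
  "qubit i k = odd (i div 2 ^ k)"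

definition basis_bits :: "nat \<Rightarrow> nat \<Rightarrow> bool list" where
  "basis_bits m i = map (qubit i) [0..<m]"

definition cadjoint :: "complex mat \<Rightarrow> complex mat" where
  "cadjoint U = mat (dim_col U) (dim_row U) (\<lambda>(i,j). cnj (U $$ (j,i)))"

definition unitary_on :: "nat \<Rightarrow> complex mat \<Rightarrow> bool" where
  "unitary_on m U \<longleftrightarrow> U \<in> carrier_mat (2^m) (2^m) \<and> cadjoint U * U = 1\<^sub>m (2^m)
      \<and> U * cadjoint U = 1\<^sub>m (2^m)"

text \<open>QMQ_c on an m-qubit register: |x,b,y> \<mapsto> |x, b xor c(x), y>, where x are
  qubits 0..n-1, b is qubit n and y are the remaining qubits.\<close>

definition qmq_target :: "nat \<Rightarrow> nat \<Rightarrow> (bool list \<Rightarrow> bool) \<Rightarrow> nat \<Rightarrow> nat" where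
  "qmq_target m n c j =
     (let bs = basis_bits m j in
      if c (take n bs) then (if qubit j n then j - 2 ^ n else j + 2 ^ n) else j)"

definition QMQ :: "nat \<Rightarrow> nat \<Rightarrow> (bool list \<Rightarrow> bool) \<Rightarrow> complex mat" where
  "QMQ m n c = mat (2^m) (2^m) (\<lambda>(i,j). if i = qmq_target m n c j then 1 else 0)"

text \<open>A quantum network U_0, O_1, U_1, ..., O_T, U_T applied to |0^m>,
  given as U_0 and the list [U_1,...,U_T]; Orc is the oracle gate.\<close>

definition net_state :: "nat \<Rightarrow> complex mat \<Rightarrow> complex mat list \<Rightarrow> complex mat \<Rightarrow> complex vec" where
  "net_state m U0 Us Orc = foldl (\<lambda>v U. U *\<^sub>v (Orc *\<^sub>v v)) (U0 *\<^sub>v unit_vec (2^m) 0) Us"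

definition out_prob :: "nat \<Rightarrow> nat list \<Rightarrow> complex vec \<Rightarrow> bool list \<Rightarrow> real" where
  "out_prob m ms v out = (\<Sum>i\<in>{i. i < 2^m \<and> map (qubit i) ms = out}. (cmod (v $ i))\<^sup>2)"

definition success_prob ::
  "nat \<Rightarrow> nat list \<Rightarrow> complex vec \<Rightarrow> (bool list \<Rightarrow> (bool list \<Rightarrow> bool) option)
     \<Rightarrow> bool list set \<Rightarrow> (bool list \<Rightarrow> bool) \<Rightarrow> real" where
  "success_prob m ms v decode S c =
     (\<Sum>out\<in>{out. length out = length ms \<and> (\<exists>h. decode out = Some h \<and> rel_dist S h c \<le> 1/10)}.
        out_prob m ms v out)"

end

theory Submission
  imports Defs "HOL-Analysis.Convex"
begin

text \<open>
  The gate QMQ_c is the sum over all inputs x of length n of a partial map P_{x,c(x)}, where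
  P_{x,b} acts on the basis states whose input register holds x as the identity (b false) or as
  the flip of the answer qubit (b true). There are only 2^(n+1) such maps, so after T queries the
  final states of the network for all concepts c lie in one subspace of dimension
  D \<le> 2^((n+1)T). For an orthonormal basis B of it, Cauchy-Schwarz bounds the weight of a unit
  vector of the subspace at the basis state i by \<Sum>_{b\<in>B} |b(i)|^2, and these bounds add up to D.
  Let c_U realise the subset U of S. In the sum of the success probabilities of the 2^d concepts
  c_U, each measurement outcome counts for at most K of them, namely for those U that differ from
  its hypothesis on at most d/10 points of S, and K \<le> 2^(d/2). Thus
  2^d (2/3) \<le> 2^(d/2) 2^((n+1)T), which forces 12 n T \<ge> d.
\<close>

section \<open>Basis states and the query gate\<close>

lemma qubit_eq_bit: "qubit = bit"
  by (simp add: fun_eq_iff qubit_def bit_iff_odd)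

lemma flip_bit_nat_eq_if: "flip_bit n (j::nat) = (if bit j n then j - 2 ^ n else j + 2 ^ n)"
proof (cases "bit j n")
  case True
  have "int (flip_bit n j) + 2 ^ n = int j"
    using True by (simp add: flip_bit_eq_if of_nat_unset_bit_eq unset_bit_eq bit_simps)
  then have "flip_bit n j + 2 ^ n = j"
    by (metis of_nat_add of_nat_eq_iff of_nat_numeral of_nat_power)
  then show ?thesis using True by auto
next
  case False
  then show ?thesis by (simp add: flip_bit_eq_if set_bit_eq)
qed

lemma flip_bit_flip_bit: "flip_bit n (flip_bit n a) = a"
  by (rule bit_eqI) (auto simp: bit_flip_bit_iff)

lemma flip_bit_less_exp:
  fixes j :: nat
  assumes "n < m" "j < 2 ^ m"
  shows "flip_bit n j < 2 ^ m"
  by (metis assms take_bit_flip_bit_eq take_bit_nat_eq_self take_bit_nat_less_exp not_le)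

lemma finite_bool_lists_length: "finite {x :: bool list. length x = n}"
  using finite_lists_length_eq[of "UNIV :: bool set" n] by simp

lemma card_bool_lists_length: "card {x :: bool list. length x = n} = 2 ^ n"
  using card_lists_length_eq[of "UNIV :: bool set" n] by simp

definition input_bits :: "nat \<Rightarrow> nat \<Rightarrow> bool list" where
  "input_bits n i = map (bit i) [0..<n]"

lemma input_bits_flip_bit: "input_bits n (flip_bit n i) = input_bits n i"
  by (simp add: input_bits_def bit_flip_bit_iff)

lemma qmq_target_eq:
  assumes "n \<le> m"
  shows "qmq_target m n c j = (if c (input_bits n j) then flip_bit n j else j)"
  using assms
  by (simp add: qmq_target_def basis_bits_def input_bits_def take_map qubit_eq_bit flip_bit_nat_eq_if)

lemma qmq_target_qmq_target: "n \<le> m \<Longrightarrow> qmq_target m n c (qmq_target m n c j) = j"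
  by (simp add: qmq_target_eq input_bits_flip_bit flip_bit_flip_bit)

lemma qmq_target_less: "n < m \<Longrightarrow> j < 2 ^ m \<Longrightarrow> qmq_target m n c j < 2 ^ m"
  by (simp add: qmq_target_eq flip_bit_less_exp)

lemma QMQ_carrier: "QMQ m n c \<in> carrier_mat (2 ^ m) (2 ^ m)"
  by (simp add: QMQ_def)

lemma QMQ_mult_vec_index:
  assumes "n < m" "w \<in> carrier_vec (2 ^ m)" "i < 2 ^ m"
  shows "(QMQ m n c *\<^sub>v w) $ i = w $ qmq_target m n c i"
proof -
  have target_iff: "i = qmq_target m n c j \<longleftrightarrow> j = qmq_target m n c i" for j
    using assms(1) qmq_target_qmq_target by (metis less_imp_le)
  have "(QMQ m n c *\<^sub>v w) $ i
      = (\<Sum>j\<in>{0..<2 ^ m}. (if i = qmq_target m n c j then 1 else 0) * w $ j)"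
    using assms by (simp add: QMQ_def scalar_prod_def)
  also have "\<dots> = (\<Sum>j\<in>{0..<2 ^ m}. if j = qmq_target m n c i then w $ j else 0)"
    by (intro sum.cong refl) (simp add: target_iff)
  finally show ?thesis
    using qmq_target_less[OF assms(1,3)] by simp
qed


section \<open>Spans of complex vectors\<close>

text \<open>A vector of \<complex>^N is a function of type nat \<Rightarrow> complex of which only the values below N matter.\<close>

definition cinner :: "nat \<Rightarrow> (nat \<Rightarrow> complex) \<Rightarrow> (nat \<Rightarrow> complex) \<Rightarrow> complex" where
  "cinner N f g = (\<Sum>i<N. cnj (f i) * g i)"

definition sqnorm :: "nat \<Rightarrow> (nat \<Rightarrow> complex) \<Rightarrow> real" where
  "sqnorm N f = (\<Sum>i<N. (cmod (f i))\<^sup>2)"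

definition lspan :: "nat \<Rightarrow> (nat \<Rightarrow> complex) set \<Rightarrow> (nat \<Rightarrow> complex) set" where
  "lspan N V = {f. \<exists>a. \<forall>i<N. f i = (\<Sum>v\<in>V. a v * v i)}"

definition orthonormal :: "nat \<Rightarrow> (nat \<Rightarrow> complex) set \<Rightarrow> bool" where
  "orthonormal N B \<longleftrightarrow> (\<forall>b\<in>B. \<forall>b'\<in>B. cinner N b b' = of_bool (b = b'))"

lemma cnj_mult_self: "cnj z * z = of_real ((cmod z)\<^sup>2)"
  by (subst complex_norm_square) (rule mult.commute)

lemma cinner_self: "cinner N f f = of_real (sqnorm N f)"
  unfolding cinner_def sqnorm_def of_real_sum by (simp add: cnj_mult_self)

lemma cinner_commute: "cinner N g f = cnj (cinner N f g)"
  unfolding cinner_def cnj_sum by (simp add: mult.commute)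

lemma sqnorm_nonneg: "0 \<le> sqnorm N f"
  unfolding sqnorm_def by (simp add: sum_nonneg)

lemma sqnorm_eq_0_iff: "sqnorm N f = 0 \<longleftrightarrow> (\<forall>i<N. f i = 0)"
  by (auto simp: sqnorm_def sum_nonneg_eq_0_iff)

lemma sqnorm_cong: "(\<And>i. i < N \<Longrightarrow> f i = g i) \<Longrightarrow> sqnorm N f = sqnorm N g"
  unfolding sqnorm_def by (intro sum.cong) simp_all

lemma lspan_intro: "(\<And>i. i < N \<Longrightarrow> f i = (\<Sum>v\<in>V. a v * v i)) \<Longrightarrow> f \<in> lspan N V"
  unfolding lspan_def mem_Collect_eq by (rule exI[of _ a]) blast

lemma in_lspan:
  assumes "finite V" "v \<in> V"
  shows "v \<in> lspan N V"
proof (rule lspan_intro)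
  fix i
  have "(\<Sum>u\<in>V. of_bool (u = v) * u i) = (\<Sum>u\<in>V. if v = u then v i else 0)"
    by (intro sum.cong refl) simp
  also have "\<dots> = v i"
    using assms(1) by (simp only: sum.delta' assms(2) if_True)
  finally show "v i = (\<Sum>u\<in>V. of_bool (u = v) * u i)"
    by simp
qed

lemma lspan_cong: "f \<in> lspan N V \<Longrightarrow> (\<And>i. i < N \<Longrightarrow> g i = f i) \<Longrightarrow> g \<in> lspan N V"
  unfolding lspan_def by auto

lemma lspan_lincomb:
  assumes "\<forall>k\<in>A. g k \<in> lspan N V" and "\<forall>i<N. f i = (\<Sum>k\<in>A. \<beta> k * g k i)"
  shows "f \<in> lspan N V"
proof -
  have "\<forall>k\<in>A. \<exists>a. \<forall>i<N. g k i = (\<Sum>v\<in>V. a v * v i)"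
    using assms(1) unfolding lspan_def by blast
  then obtain a where a: "\<forall>k\<in>A. \<forall>i<N. g k i = (\<Sum>v\<in>V. a k v * v i)"
    by (rule bchoice[THEN exE])
  show ?thesis
  proof (rule lspan_intro)
    fix i assume "i < N"
    then have "f i = (\<Sum>k\<in>A. \<Sum>v\<in>V. \<beta> k * a k v * v i)"
      using assms(2) a by (simp add: sum_distrib_left mult.assoc)
    also have "\<dots> = (\<Sum>v\<in>V. \<Sum>k\<in>A. \<beta> k * a k v * v i)"
      by (rule sum.swap)
    finally show "f i = (\<Sum>v\<in>V. (\<Sum>k\<in>A. \<beta> k * a k v) * v i)"
      by (simp add: sum_distrib_right)
  qed
qed

lemma lspan_subset: "\<forall>v\<in>V. v \<in> lspan N W \<Longrightarrow> lspan N V \<subseteq> lspan N W"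
  by (auto simp: lspan_def[of N V] intro: lspan_lincomb)

lemma cinner_lincomb_orthonormal:
  assumes "orthonormal N B" "finite B" "b \<in> B" "\<forall>i<N. f i = (\<Sum>b'\<in>B. a b' * b' i)"
  shows "cinner N b f = a b"
proof -
  have "cinner N b f = (\<Sum>i<N. \<Sum>b'\<in>B. a b' * (cnj (b i) * b' i))"
    using assms(4) unfolding cinner_def by (simp add: sum_distrib_left mult_ac)
  also have "\<dots> = (\<Sum>b'\<in>B. a b' * cinner N b b')"
    unfolding cinner_def sum_distrib_left by (rule sum.swap)
  also have "\<dots> = (\<Sum>b'\<in>B. if b' = b then a b else 0)"
    using assms(1,3) unfolding orthonormal_def by (intro sum.cong) auto
  finally show ?thesis using assms(2,3) by simp
qed

lemma sqnorm_lincomb_orthonormal: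
  assumes "orthonormal N B" "finite B" "\<forall>i<N. f i = (\<Sum>b\<in>B. a b * b i)"
  shows "sqnorm N f = (\<Sum>b\<in>B. (cmod (a b))\<^sup>2)"
proof -
  have "cnj (f i) = (\<Sum>b\<in>B. cnj (a b) * cnj (b i))" if "i < N" for i
    using assms(3) that by (simp add: cnj_sum)
  then have "cinner N f f = (\<Sum>i<N. \<Sum>b\<in>B. cnj (a b) * (cnj (b i) * f i))"
    unfolding cinner_def by (intro sum.cong refl) (simp add: sum_distrib_left sum_distrib_right mult_ac)
  also have "\<dots> = (\<Sum>b\<in>B. cnj (a b) * cinner N b f)"
    unfolding cinner_def sum_distrib_left by (rule sum.swap)
  also have "\<dots> = (\<Sum>b\<in>B. of_real ((cmod (a b))\<^sup>2))"
    using cinner_lincomb_orthonormal[OF assms(1,2) _ assms(3)]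
    by (intro sum.cong refl) (simp add: cnj_mult_self)
  finally show ?thesis
    unfolding cinner_self of_real_sum[symmetric] of_real_eq_iff .
qed

lemma orthonormal_sum_sq_entries:
  assumes "orthonormal N B"
  shows "(\<Sum>i<N. \<Sum>b\<in>B. (cmod (b i))\<^sup>2) = real (card B)"
proof -
  have unit: "(\<Sum>i<N. (cmod (b i))\<^sup>2) = 1" if "b \<in> B" for b
  proof -
    have "cinner N b b = of_bool (b = b)"
      using assms that unfolding orthonormal_def by blast
    then have "complex_of_real (sqnorm N b) = 1"
      unfolding cinner_self by simp
    then show ?thesis
      unfolding of_real_eq_1_iff sqnorm_def .
  qed
  have "(\<Sum>i<N. \<Sum>b\<in>B. (cmod (b i))\<^sup>2) = (\<Sum>b\<in>B. \<Sum>i<N. (cmod (b i))\<^sup>2)"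
    by (rule sum.swap)
  also have "\<dots> = (\<Sum>b\<in>B. 1)"
    using unit by (rule sum.cong[OF refl])
  finally show ?thesis by simp
qed

lemma cinner_diff_right: "cinner N b (\<lambda>i. f i - g i) = cinner N b f - cinner N b g"
  unfolding cinner_def by (simp add: right_diff_distrib sum_subtractf)

lemma cinner_divide_right: "cinner N b (\<lambda>i. f i / c) = cinner N b f / c"
  unfolding cinner_def by (simp add: sum_divide_distrib)

lemma cinner_residual_orthonormal:
  assumes "orthonormal N B" "finite B" "b \<in> B"
  shows "cinner N b (\<lambda>i. v i - (\<Sum>b'\<in>B. cinner N b' v * b' i)) = 0"
  using cinner_lincomb_orthonormal[OF assms, where a = "\<lambda>b'. cinner N b' v"]
  by (simp add: cinner_diff_right)

lemma lspan_insert_lincomb: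
  assumes "finite B" "u \<notin> B" "\<And>i. i < N \<Longrightarrow> v i = c * u i + (\<Sum>b\<in>B. a b * b i)"
  shows "v \<in> lspan N (insert u B)"
proof (rule lspan_intro)
  fix i assume "i < N"
  have "(\<Sum>x\<in>insert u B. (if x = u then c else a x) * x i) = c * u i + (\<Sum>b\<in>B. (if b = u then c else a b) * b i)"
    using assms(1,2) by simp
  also have "(\<Sum>b\<in>B. (if b = u then c else a b) * b i) = (\<Sum>b\<in>B. a b * b i)"
    using assms(2) by (intro sum.cong refl) auto
  also have "c * u i + \<dots> = v i"
    using assms(3) \<open>i < N\<close> by simp
  finally show "v i = (\<Sum>x\<in>insert u B. (if x = u then c else a x) * x i)"
    by simp
qed

lemma orthonormal_insert:
  assumes "orthonormal N B" "cinner N u u = 1" "\<And>b. b \<in> B \<Longrightarrow> cinner N b u = 0"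
  shows "u \<notin> B" "orthonormal N (insert u B)"
proof -
  show u_notin: "u \<notin> B"
    using assms(2) assms(3)[of u] by (metis zero_neq_one)
  show "orthonormal N (insert u B)"
    unfolding orthonormal_def
  proof (intro ballI)
    fix x y assume "x \<in> insert u B" "y \<in> insert u B"
    then consider "x = u" "y = u" | "x = u" "y \<in> B" | "x \<in> B" "y = u" | "x \<in> B" "y \<in> B"
      by blast
    then show "cinner N x y = of_bool (x = y)"
    proof cases
      case 2
      then show ?thesis
        using assms(3)[of y] u_notin cinner_commute[of N y u] by auto
    next
      case 3
      then show ?thesis
        using assms(3)[of x] u_notin by auto
    next
      case 4
      then show ?thesis
        using assms(1) unfolding orthonormal_def by blast
    qed (simp add: assms(2))
  qed
qed

lemma orthonormal_extend:
  assumes "orthonormal N B" "finite B"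
  obtains B' where "finite B'" "card B' \<le> Suc (card B)" "orthonormal N B'" "B \<subseteq> B'"
    "v \<in> lspan N B'"
proof -
  define p where "p = (\<lambda>i. \<Sum>b\<in>B. cinner N b v * b i)"
  define r where "r = (\<lambda>i. v i - p i)"
  have r_orth: "cinner N b r = 0" if "b \<in> B" for b
    using cinner_residual_orthonormal[OF assms that] unfolding r_def p_def .
  show ?thesis
  proof (cases "sqnorm N r = 0")
    case True
    then have "v \<in> lspan N B"
      by (intro lspan_intro[where a = "\<lambda>b. cinner N b v"]) (simp add: sqnorm_eq_0_iff r_def p_def)
    then show ?thesis
      using assms that[of B] by simp
  next
    case False
    define s where "s = sqrt (sqnorm N r)"
    have s_pos: "s > 0"
      using False sqnorm_nonneg[of N r] by (simp add: s_def)
    define u where "u = (\<lambda>i. r i / complex_of_real s)"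
    have "cinner N u u = cinner N r r / complex_of_real (s * s)"
      unfolding cinner_def u_def by (simp add: sum_divide_distrib)
    also have "\<dots> = 1"
      using False s_pos by (simp add: cinner_self s_def flip: of_real_mult)
    finally have u_unit: "cinner N u u = 1" .
    have u_orth: "cinner N b u = 0" if "b \<in> B" for b
      using r_orth[OF that] by (simp add: u_def cinner_divide_right)
    have u: "u \<notin> B" "orthonormal N (insert u B)"
      using orthonormal_insert[OF assms(1) u_unit] u_orth by blast+
    have v_eq: "v i = complex_of_real s * u i + (\<Sum>b\<in>B. cinner N b v * b i)" for i
      using s_pos by (simp add: u_def r_def p_def)
    have "v \<in> lspan N (insert u B)"
      by (rule lspan_insert_lincomb[OF assms(2) u(1)]) (rule v_eq)
    then show ?thesis
      using assms u that[of "insert u B"] by auto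
  qed
qed

lemma orthonormal_basis_of_lspan:
  assumes "finite V"
  shows "\<exists>B. finite B \<and> card B \<le> card V \<and> orthonormal N B \<and> lspan N V \<subseteq> lspan N B"
  using assms
proof (induction rule: finite_induct)
  case empty
  show ?case
    by (intro exI[of _ "{}"]) (simp add: orthonormal_def)
next
  case (insert v V)
  then obtain B where B: "finite B" "card B \<le> card V" "orthonormal N B" "lspan N V \<subseteq> lspan N B"
    by blast
  obtain B' where B': "finite B'" "card B' \<le> Suc (card B)" "orthonormal N B'" "B \<subseteq> B'"
    "v \<in> lspan N B'"
    using orthonormal_extend[OF B(3,1)] by blast
  have "lspan N B \<subseteq> lspan N B'"
    using B'(1,4) by (intro lspan_subset) (auto intro: in_lspan)
  then have "\<forall>x\<in>insert v V. x \<in> lspan N B'"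
    using B(4) B'(5) in_lspan[OF insert.hyps(1)] by blast
  then have "lspan N (insert v V) \<subseteq> lspan N B'"
    by (rule lspan_subset)
  moreover have "card B' \<le> card (insert v V)"
    using B(2) B'(2) insert.hyps by simp
  ultimately show ?case
    using B'(1,3) by blast
qed

lemma entry_sq_le_orthonormal:
  assumes "orthonormal N B" "finite B" "f \<in> lspan N B" "i < N"
  shows "(cmod (f i))\<^sup>2 \<le> sqnorm N f * (\<Sum>b\<in>B. (cmod (b i))\<^sup>2)"
proof -
  obtain a where a: "\<forall>i<N. f i = (\<Sum>b\<in>B. a b * b i)"
    using assms(3) unfolding lspan_def by blast
  have "cmod (f i) \<le> (\<Sum>b\<in>B. cmod (a b) * cmod (b i))"
    using a assms(4) norm_sum[of "\<lambda>b. a b * b i" B] by (simp add: norm_mult)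
  then have "(cmod (f i))\<^sup>2 \<le> (\<Sum>b\<in>B. cmod (a b) * cmod (b i))\<^sup>2"
    by (simp add: power_mono)
  also have "\<dots> \<le> (\<Sum>b\<in>B. (cmod (a b))\<^sup>2) * (\<Sum>b\<in>B. (cmod (b i))\<^sup>2)"
    by (rule Cauchy_Schwarz_ineq_sum)
  finally show ?thesis
    using sqnorm_lincomb_orthonormal[OF assms(1,2) a] by simp
qed

lemma lspan_unit_entry_bound:
  assumes "finite W"
  obtains wt :: "nat \<Rightarrow> real" where "\<And>i. 0 \<le> wt i" "(\<Sum>i<N. wt i) \<le> real (card W)"
    "\<And>f i. f \<in> lspan N W \<Longrightarrow> sqnorm N f = 1 \<Longrightarrow> i < N \<Longrightarrow> (cmod (f i))\<^sup>2 \<le> wt i"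
proof -
  obtain B where B: "finite B" "card B \<le> card W" "orthonormal N B" "lspan N W \<subseteq> lspan N B"
    using orthonormal_basis_of_lspan[OF assms] by blast
  show ?thesis
  proof
    show "0 \<le> (\<Sum>b\<in>B. (cmod (b i))\<^sup>2)" for i
      by (simp add: sum_nonneg)
    show "(\<Sum>i<N. \<Sum>b\<in>B. (cmod (b i))\<^sup>2) \<le> real (card W)"
      using B(2) orthonormal_sum_sq_entries[OF B(3)] by simp
    show "(cmod (f i))\<^sup>2 \<le> (\<Sum>b\<in>B. (cmod (b i))\<^sup>2)"
      if "f \<in> lspan N W" "sqnorm N f = 1" "i < N" for f i
      using entry_sq_le_orthonormal[OF B(3,1) _ that(3), of f] B(4) that(1,2) by auto
  qed
qed


definition mat_app :: "nat \<Rightarrow> complex mat \<Rightarrow> (nat \<Rightarrow> complex) \<Rightarrow> nat \<Rightarrow> complex" where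
  "mat_app N U f = (\<lambda>i. \<Sum>j<N. U $$ (i, j) * f j)"

lemma mult_mat_vec_index_mat_app:
  assumes "U \<in> carrier_mat N N" "w \<in> carrier_vec N" "i < N"
  shows "(U *\<^sub>v w) $ i = mat_app N U (($) w) i"
  using assms by (auto simp: mat_app_def scalar_prod_def atLeast0LessThan)

lemma mat_app_cong: "(\<And>j. j < N \<Longrightarrow> f j = g j) \<Longrightarrow> mat_app N U f = mat_app N U g"
  unfolding mat_app_def by (intro ext sum.cong) simp_all

lemma mat_app_lincomb:
  "mat_app N U (\<lambda>j. \<Sum>x\<in>A. \<beta> x * g x j) i = (\<Sum>x\<in>A. \<beta> x * mat_app N U (g x) i)"
proof -
  have "mat_app N U (\<lambda>j. \<Sum>x\<in>A. \<beta> x * g x j) i = (\<Sum>j<N. \<Sum>x\<in>A. \<beta> x * (U $$ (i, j) * g x j))"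
    unfolding mat_app_def by (simp add: sum_distrib_left mult_ac)
  also have "\<dots> = (\<Sum>x\<in>A. \<beta> x * mat_app N U (g x) i)"
    unfolding mat_app_def sum_distrib_left by (rule sum.swap)
  finally show ?thesis .
qed

lemma cadjoint_mult_index:
  assumes "U \<in> carrier_mat N N" "j < N" "k < N"
  shows "(cadjoint U * U) $$ (j, k) = (\<Sum>i<N. cnj (U $$ (i, j)) * U $$ (i, k))"
  using assms by (auto simp: cadjoint_def scalar_prod_def atLeast0LessThan)

lemma sqnorm_mat_app_unitary:
  assumes "U \<in> carrier_mat N N" "cadjoint U * U = 1\<^sub>m N"
  shows "sqnorm N (mat_app N U f) = sqnorm N f"
proof -
  have col: "(\<Sum>i<N. cnj (U $$ (i, j)) * U $$ (i, k)) = of_bool (j = k)" if "j < N" "k < N" for j k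
    using cadjoint_mult_index[OF assms(1) that, symmetric] assms(2) that by simp
  have "cinner N (mat_app N U f) (mat_app N U f)
      = (\<Sum>i<N. \<Sum>j<N. \<Sum>k<N. cnj (U $$ (i, j)) * U $$ (i, k) * (cnj (f j) * f k))"
    unfolding cinner_def mat_app_def cnj_sum sum_product by (simp add: mult_ac)
  also have "\<dots> = (\<Sum>j<N. \<Sum>k<N. (\<Sum>i<N. cnj (U $$ (i, j)) * U $$ (i, k)) * (cnj (f j) * f k))"
    unfolding sum_distrib_right
    by (subst sum.swap) (rule sum.cong[OF refl], rule sum.swap)
  also have "\<dots> = (\<Sum>j<N. \<Sum>k<N. of_bool (j = k) * (cnj (f j) * f k))"
    by (intro sum.cong refl) (simp add: col)
  also have "\<dots> = cinner N f f"
    by (simp add: cinner_def)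
  finally show ?thesis
    unfolding cinner_self of_real_eq_iff .
qed


section \<open>The states reachable with a given number of queries\<close>

definition query_piece :: "nat \<Rightarrow> bool list \<times> bool \<Rightarrow> (nat \<Rightarrow> complex) \<Rightarrow> nat \<Rightarrow> complex" where
  "query_piece n k f =
     (\<lambda>i. if input_bits n i = fst k then (if snd k then f (flip_bit n i) else f i) else 0)"

lemma oracle_eq_sum_query_pieces:
  assumes "n \<le> m"
  shows "f (qmq_target m n c i) = (\<Sum>x\<in>{x. length x = n}. query_piece n (x, c x) f i)"
proof -
  have "(\<Sum>x\<in>{x. length x = n}. query_piece n (x, c x) f i)
      = (\<Sum>x\<in>{x. length x = n}. if x = input_bits n i then f (qmq_target m n c i) else 0)"
    using assms by (intro sum.cong refl) (auto simp: query_piece_def qmq_target_eq)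
  also have "\<dots> = f (qmq_target m n c i)"
    by (subst sum.delta) (simp_all add: input_bits_def finite_bool_lists_length)
  finally show ?thesis ..
qed

lemma query_piece_lincomb:
  assumes "n < m" "\<forall>j<2 ^ m. f j = (\<Sum>v\<in>V. a v * v j)" "i < 2 ^ m"
  shows "query_piece n k f i = (\<Sum>v\<in>V. a v * query_piece n k v i)"
  using assms flip_bit_less_exp[OF assms(1,3)] by (simp add: query_piece_def)

definition query_keys :: "nat \<Rightarrow> (bool list \<times> bool) set" where
  "query_keys n = {x. length x = n} \<times> UNIV"

definition query_step :: "nat \<Rightarrow> nat \<Rightarrow> complex mat \<Rightarrow> (nat \<Rightarrow> complex) set \<Rightarrow> (nat \<Rightarrow> complex) set" where
  "query_step N n U V = (\<lambda>(k, v). mat_app N U (query_piece n k v)) ` (query_keys n \<times> V)"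

fun query_generators ::
  "nat \<Rightarrow> nat \<Rightarrow> (nat \<Rightarrow> complex) set \<Rightarrow> complex mat list \<Rightarrow> (nat \<Rightarrow> complex) set" where
  "query_generators N n V [] = V"
| "query_generators N n V (U # Us) = query_generators N n (query_step N n U V) Us"

lemma finite_query_keys: "finite (query_keys n)"
  by (simp add: query_keys_def finite_bool_lists_length)

lemma card_query_keys: "card (query_keys n) = 2 ^ (n + 1)"
  by (simp add: query_keys_def card_cartesian_product card_bool_lists_length)

lemma finite_query_step: "finite V \<Longrightarrow> finite (query_step N n U V)"
  by (simp add: query_step_def finite_query_keys)

lemma card_query_step: "finite V \<Longrightarrow> card (query_step N n U V) \<le> 2 ^ (n + 1) * card V"
  unfolding query_step_def
  using card_image_le[of "query_keys n \<times> V"]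
  by (simp add: finite_query_keys card_cartesian_product card_query_keys)

lemma finite_card_query_generators:
  "finite V \<Longrightarrow>
     finite (query_generators N n V Us) \<and>
     card (query_generators N n V Us) \<le> 2 ^ ((n + 1) * length Us) * card V"
proof (induction Us arbitrary: V)
  case Nil
  then show ?case by simp
next
  case (Cons U Us)
  let ?V' = "query_step N n U V"
  have "card (query_generators N n ?V' Us) \<le> 2 ^ ((n + 1) * length Us) * card ?V'"
    using Cons finite_query_step by blast
  also have "\<dots> \<le> 2 ^ ((n + 1) * length Us) * (2 ^ (n + 1) * card V)"
    using card_query_step[OF Cons.prems] by simp
  finally show ?case
    using Cons finite_query_step by (simp add: power_add mult_ac)
qed

lemma query_round_lspan:
  assumes "n < m" "f \<in> lspan (2 ^ m) V" "finite V"
  shows "mat_app (2 ^ m) U (\<lambda>j. f (qmq_target m n c j)) \<in> lspan (2 ^ m) (query_step (2 ^ m) n U V)"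
proof -
  let ?X = "{x :: bool list. length x = n}"
  let ?piece = "\<lambda>p j. query_piece n (fst p, c (fst p)) (snd p) j"
  obtain a where a: "\<forall>j<2 ^ m. f j = (\<Sum>v\<in>V. a v * v j)"
    using assms(2) unfolding lspan_def by blast
  have "f (qmq_target m n c j) = (\<Sum>p\<in>?X \<times> V. a (snd p) * ?piece p j)" if "j < 2 ^ m" for j
  proof -
    have "f (qmq_target m n c j) = (\<Sum>x\<in>?X. \<Sum>v\<in>V. a v * query_piece n (x, c x) v j)"
      using oracle_eq_sum_query_pieces[of n m f c j] query_piece_lincomb[OF assms(1) a that] assms(1)
      by simp
    then show ?thesis
      by (simp add: sum.cartesian_product case_prod_beta)
  qed
  then have "mat_app (2 ^ m) U (\<lambda>j. f (qmq_target m n c j))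
      = mat_app (2 ^ m) U (\<lambda>j. \<Sum>p\<in>?X \<times> V. a (snd p) * ?piece p j)"
    by (rule mat_app_cong)
  then have "\<forall>i<2 ^ m. mat_app (2 ^ m) U (\<lambda>j. f (qmq_target m n c j)) i
      = (\<Sum>p\<in>?X \<times> V. a (snd p) * mat_app (2 ^ m) U (?piece p) i)"
    by (simp add: mat_app_lincomb)
  moreover have "mat_app (2 ^ m) U (?piece p) \<in> query_step (2 ^ m) n U V" if "p \<in> ?X \<times> V" for p
    using that unfolding query_step_def query_keys_def
    by (intro image_eqI[of _ _ "((fst p, c (fst p)), snd p)"]) auto
  then have "\<forall>p\<in>?X \<times> V. mat_app (2 ^ m) U (?piece p) \<in> lspan (2 ^ m) (query_step (2 ^ m) n U V)"
    using assms(3) finite_query_step by (blast intro: in_lspan)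
  ultimately show ?thesis
    by (rule lspan_lincomb[rotated])
qed

lemma sqnorm_qmq_target:
  assumes "n < m"
  shows "sqnorm (2 ^ m) (\<lambda>j. f (qmq_target m n c j)) = sqnorm (2 ^ m) f"
  unfolding sqnorm_def
  using assms qmq_target_qmq_target[of n m c] qmq_target_less[OF assms]
  by (intro sum.reindex_bij_witness[of _ "qmq_target m n c" "qmq_target m n c"]) auto

lemma query_round_index:
  assumes "n < m" "unitary_on m U" "w \<in> carrier_vec (2 ^ m)" "i < 2 ^ m"
  shows "(U *\<^sub>v (QMQ m n c *\<^sub>v w)) $ i = mat_app (2 ^ m) U (\<lambda>j. w $ qmq_target m n c j) i"
proof -
  have "U \<in> carrier_mat (2 ^ m) (2 ^ m)"
    using assms(2) by (simp add: unitary_on_def)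
  then have "(U *\<^sub>v (QMQ m n c *\<^sub>v w)) $ i = mat_app (2 ^ m) U (($) (QMQ m n c *\<^sub>v w)) i"
    using mult_mat_vec_carrier[OF QMQ_carrier assms(3)] assms(4) by (rule mult_mat_vec_index_mat_app)
  also have "mat_app (2 ^ m) U (($) (QMQ m n c *\<^sub>v w)) = mat_app (2 ^ m) U (\<lambda>j. w $ qmq_target m n c j)"
    by (rule mat_app_cong) (simp add: QMQ_mult_vec_index[OF assms(1,3)])
  finally show ?thesis .
qed

lemma query_rounds:
  fixes c :: "bool list \<Rightarrow> bool"
  assumes "n < m" "\<forall>U\<in>set Us. unitary_on m U"
    and "w \<in> carrier_vec (2 ^ m)" "finite V" "($) w \<in> lspan (2 ^ m) V"
  defines "w' \<equiv> foldl (\<lambda>v U. U *\<^sub>v (QMQ m n c *\<^sub>v v)) w Us"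
  shows "w' \<in> carrier_vec (2 ^ m) \<and> sqnorm (2 ^ m) (($) w') = sqnorm (2 ^ m) (($) w)
    \<and> ($) w' \<in> lspan (2 ^ m) (query_generators (2 ^ m) n V Us)"
  unfolding w'_def using assms(2-5)
proof (induction Us arbitrary: w V)
  case Nil
  then show ?case by simp
next
  case (Cons U Us)
  let ?w1 = "U *\<^sub>v (QMQ m n c *\<^sub>v w)"
  let ?f = "mat_app (2 ^ m) U (\<lambda>j. w $ qmq_target m n c j)"
  have U: "unitary_on m U" "\<forall>U\<in>set Us. unitary_on m U"
    using Cons.prems(1) by auto
  have index: "?w1 $ i = ?f i" if "i < 2 ^ m" for i
    using query_round_index[OF assms(1) U(1) Cons.prems(2) that] .
  have "?w1 \<in> carrier_vec (2 ^ m)"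
    using U(1) mult_mat_vec_carrier[OF _ mult_mat_vec_carrier[OF QMQ_carrier Cons.prems(2)]]
    by (auto simp: unitary_on_def)
  moreover have "sqnorm (2 ^ m) (($) ?w1) = sqnorm (2 ^ m) (($) w)"
    using U(1) index sqnorm_cong[of "2 ^ m" "($) ?w1" ?f]
    by (simp add: unitary_on_def sqnorm_mat_app_unitary sqnorm_qmq_target[OF assms(1)])
  moreover have "($) ?w1 \<in> lspan (2 ^ m) (query_step (2 ^ m) n U V)"
    using query_round_lspan[OF assms(1) Cons.prems(4,3)] index by (rule lspan_cong)
  ultimately show ?case
    using Cons.IH[OF U(2) _ finite_query_step[OF Cons.prems(3)]] by simp
qed

lemma initial_state_unit:
  assumes "unitary_on m U0"
  shows "U0 *\<^sub>v unit_vec (2 ^ m) 0 \<in> carrier_vec (2 ^ m)"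
    and "sqnorm (2 ^ m) (($) (U0 *\<^sub>v unit_vec (2 ^ m) 0)) = 1"
proof -
  have U0: "U0 \<in> carrier_mat (2 ^ m) (2 ^ m)" "cadjoint U0 * U0 = 1\<^sub>m (2 ^ m)"
    using assms by (auto simp: unitary_on_def)
  then show "U0 *\<^sub>v unit_vec (2 ^ m) 0 \<in> carrier_vec (2 ^ m)"
    by simp
  have "sqnorm (2 ^ m) (($) (U0 *\<^sub>v unit_vec (2 ^ m) 0))
      = sqnorm (2 ^ m) (mat_app (2 ^ m) U0 (($) (unit_vec (2 ^ m) 0)))"
    by (intro sqnorm_cong mult_mat_vec_index_mat_app[OF U0(1)]) simp_all
  also have "\<dots> = sqnorm (2 ^ m) (($) (unit_vec (2 ^ m) 0))"
    by (rule sqnorm_mat_app_unitary[OF U0])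
  also have "\<dots> = (\<Sum>i<(2 :: nat) ^ m. if i = 0 then 1 else (0 :: real))"
    unfolding sqnorm_def by (intro sum.cong refl) simp
  finally show "sqnorm (2 ^ m) (($) (U0 *\<^sub>v unit_vec (2 ^ m) 0)) = 1"
    by simp
qed

lemma net_state_entry_bound:
  assumes "n < m" "unitary_on m U0" "\<forall>U\<in>set Us. unitary_on m U"
  obtains wt :: "nat \<Rightarrow> real" where "\<And>i. 0 \<le> wt i"
    "(\<Sum>i<2 ^ m. wt i) \<le> 2 ^ ((n + 1) * length Us)"
    "\<And>c i. i < 2 ^ m \<Longrightarrow> (cmod (net_state m U0 Us (QMQ m n c) $ i))\<^sup>2 \<le> wt i"
proof -
  define w0 where "w0 = U0 *\<^sub>v unit_vec (2 ^ m) 0"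
  define W where "W = query_generators (2 ^ m) n {($) w0} Us"
  have W: "finite W" "card W \<le> 2 ^ ((n + 1) * length Us)"
    using finite_card_query_generators[of "{($) w0}" "2 ^ m" n Us] by (simp_all add: W_def)
  obtain wt where wt: "\<And>i. 0 \<le> wt i" "(\<Sum>i<2 ^ m. wt i) \<le> real (card W)"
    "\<And>f i. f \<in> lspan (2 ^ m) W \<Longrightarrow> sqnorm (2 ^ m) f = 1 \<Longrightarrow> i < 2 ^ m \<Longrightarrow>
      (cmod (f i))\<^sup>2 \<le> wt i"
    using lspan_unit_entry_bound[OF W(1)] by blast
  show ?thesis
  proof (rule that[OF wt(1)])
    have "real (card W) \<le> 2 ^ ((n + 1) * length Us)"
      using W(2) by (metis of_nat_le_iff of_nat_numeral of_nat_power)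
    then show "(\<Sum>i<2 ^ m. wt i) \<le> 2 ^ ((n + 1) * length Us)"
      using wt(2) by linarith
    fix c and i :: nat
    assume "i < 2 ^ m"
    have "($) w0 \<in> lspan (2 ^ m) {($) w0}"
      by (simp add: in_lspan)
    then show "(cmod (net_state m U0 Us (QMQ m n c) $ i))\<^sup>2 \<le> wt i"
      using query_rounds[OF assms(1,3) initial_state_unit(1)[OF assms(2)], of "{($) w0}" c]
        initial_state_unit(2)[OF assms(2)] \<open>i < 2 ^ m\<close>
      by (intro wt(3)) (simp_all add: net_state_def w0_def W_def)
  qed
qed


section \<open>Success probability and counting\<close>

lemma sum_out_prob_eq:
  "(\<Sum>out\<in>{out. length out = length ms \<and> P out}. out_prob m ms v out)
     = (\<Sum>i<2 ^ m. if P (map (qubit i) ms) then (cmod (v $ i))\<^sup>2 else 0)"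
proof -
  let ?G = "{out. length out = length ms \<and> P out}"
  let ?A = "{i. i < 2 ^ m \<and> map (qubit i) ms \<in> ?G}"
  have "finite ?G"
    by (rule finite_subset[OF _ finite_bool_lists_length[of "length ms"]]) auto
  have "(\<Sum>out\<in>?G. out_prob m ms v out)
      = (\<Sum>out\<in>?G. \<Sum>i\<in>{i \<in> ?A. map (qubit i) ms = out}. (cmod (v $ i))\<^sup>2)"
    unfolding out_prob_def by (intro sum.cong refl) auto
  also have "\<dots> = (\<Sum>i\<in>?A. (cmod (v $ i))\<^sup>2)"
    using \<open>finite ?G\<close> by (intro sum.group) auto
  also have "?A = {i \<in> {..<2 ^ m}. P (map (qubit i) ms)}"
    by auto
  also have "(\<Sum>i\<in>{i \<in> {..<2 ^ m}. P (map (qubit i) ms)}. (cmod (v $ i))\<^sup>2)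
      = (\<Sum>i<2 ^ m. if P (map (qubit i) ms) then (cmod (v $ i))\<^sup>2 else 0)"
    by (rule sum.inter_filter) simp
  finally show ?thesis .
qed

lemma sum_Pow_power_card: "finite S \<Longrightarrow> (\<Sum>E\<in>Pow S. x ^ card E) = (1 + x) ^ card S"
  for x :: "'a :: comm_semiring_1"
  using prod_add[of S "\<lambda>_. x" "\<lambda>_. 1"] by (simp add: add.commute)

lemma nine_eighths_power_le: "(9 / 8 :: real) ^ d \<le> 2 powr (real d / 5)"
proof -
  have "(9 / 8 :: real) ^ d = (9 / 8) powr (5 * (real d / 5))"
    by (simp add: powr_realpow)
  also have "\<dots> = ((9 / 8) powr 5) powr (real d / 5)"
    by (rule powr_powr[symmetric])
  also have "\<dots> = ((9 / 8) ^ 5) powr (real d / 5)"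
    by (simp add: powr_numeral)
  also have "\<dots> \<le> 2 powr (real d / 5)"
    by (intro powr_mono2) (auto simp: power_divide)
  finally show ?thesis .
qed

text \<open>Each E in the set has weight 2^(3d/10) 8^(-|E|) \<ge> 1, and the weights of all subsets of S
  add up to 2^(3d/10) (9/8)^d.\<close>

lemma card_small_subsets_le:
  assumes "finite S"
  shows "real (card {E. E \<subseteq> S \<and> 10 * card E \<le> card S}) \<le> 2 powr (real (card S) / 2)"
proof -
  let ?d = "real (card S)"
  let ?A = "{E. E \<subseteq> S \<and> 10 * card E \<le> card S}"
  have "real (card ?A) = (\<Sum>E\<in>?A. 1)"
    by simp
  also have "\<dots> \<le> (\<Sum>E\<in>?A. 2 powr (3 * ?d / 10) * (1 / 8) ^ card E)"
  proof (intro sum_mono)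
    fix E assume "E \<in> ?A"
    then have "3 * real (card E) \<le> 3 * ?d / 10"
      by simp
    then have "1 \<le> 2 powr (3 * ?d / 10 - 3 * real (card E))"
      by (intro ge_one_powr_ge_zero) auto
    also have "\<dots> = 2 powr (3 * ?d / 10) * (1 / 8) ^ card E"
      by (simp add: powr_diff powr_realpow power_mult power_one_over flip: powr_powr)
    finally show "1 \<le> 2 powr (3 * ?d / 10) * (1 / 8) ^ card E" .
  qed
  also have "\<dots> \<le> (\<Sum>E\<in>Pow S. 2 powr (3 * ?d / 10) * (1 / 8) ^ card E)"
    using assms by (intro sum_mono2) auto
  also have "\<dots> = 2 powr (3 * ?d / 10) * (\<Sum>E\<in>Pow S. (1 / 8) ^ card E)"
    by (rule sum_distrib_left[symmetric])
  also have "\<dots> = 2 powr (3 * ?d / 10) * (9 / 8) ^ card S"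
    using sum_Pow_power_card[OF assms, of "1 / 8 :: real"] by simp
  also have "\<dots> \<le> 2 powr (3 * ?d / 10) * 2 powr (?d / 5)"
    by (simp add: nine_eighths_power_le)
  also have "\<dots> = 2 powr (?d / 2)"
    by (simp flip: powr_add)
  finally show ?thesis .
qed

lemma small_subsets_of_small_set:
  assumes "finite S" "card S < 10"
  shows "{E. E \<subseteq> S \<and> 10 * card E \<le> card S} = {{}}"
proof -
  have "E = {}" if "E \<subseteq> S" "10 * card E \<le> card S" for E
  proof -
    have "card E = 0"
      using that(2) assms(2) by linarith
    then show ?thesis
      using finite_subset[OF that(1) assms(1)] by simp
  qed
  then show ?thesis
    by auto
qed

lemma card_close_labelings_le:
  assumes "finite S" "S \<noteq> {}" "\<And>U x. U \<subseteq> S \<Longrightarrow> x \<in> S \<Longrightarrow> cf U x = (x \<in> U)"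
  shows "card {U \<in> Pow S. \<exists>h. hyp = Some h \<and> rel_dist S h (cf U) \<le> 1 / 10}
    \<le> card {E. E \<subseteq> S \<and> 10 * card E \<le> card S}"
proof (cases hyp)
  case None
  then show ?thesis by simp
next
  case (Some h)
  let ?diff = "\<lambda>U. {x \<in> S. h x \<noteq> (x \<in> U)}"
  have "10 * card (?diff U) \<le> card S" if "U \<subseteq> S" "rel_dist S h (cf U) \<le> 1 / 10" for U
  proof -
    have "{x \<in> S. h x \<noteq> cf U x} = ?diff U"
      using assms(3)[OF that(1)] by auto
    then have "real (card (?diff U)) / real (card S) \<le> 1 / 10"
      using that(2) by (simp add: rel_dist_def)
    then show ?thesis
      using assms(1,2) by (simp add: field_simps card_gt_0_iff)
  qed
  moreover have "inj_on ?diff (Pow S)"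
    by (rule inj_onI) blast
  ultimately show ?thesis
    using Some assms(1)
    by (intro card_inj_on_le[where f = ?diff]) (auto intro: inj_on_subset)
qed

lemma double_counting_le:
  fixes p :: "'u \<Rightarrow> 'i \<Rightarrow> real" and wt :: "'i \<Rightarrow> real"
  assumes "finite F" "\<And>U i. U \<in> F \<Longrightarrow> i \<in> I \<Longrightarrow> p U i \<le> wt i" "\<And>i. 0 \<le> wt i"
    and "\<And>i. i \<in> I \<Longrightarrow> card {U \<in> F. good U i} \<le> K"
  shows "(\<Sum>U\<in>F. \<Sum>i\<in>I. if good U i then p U i else 0) \<le> K * (\<Sum>i\<in>I. wt i)"
proof -
  have "(\<Sum>U\<in>F. \<Sum>i\<in>I. if good U i then p U i else 0) \<le> (\<Sum>U\<in>F. \<Sum>i\<in>I. if good U i then wt i else 0)"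
    using assms(2) by (intro sum_mono) auto
  also have "\<dots> = (\<Sum>i\<in>I. real (card {U \<in> F. good U i}) * wt i)"
    by (subst sum.swap) (simp add: sum.If_cases assms(1) Int_def)
  also have "\<dots> \<le> (\<Sum>i\<in>I. real K * wt i)"
    using assms(3,4) by (intro sum_mono mult_right_mono) auto
  finally show ?thesis
    by (simp add: sum_distrib_left)
qed

lemma two_power_le_imp_le_1:
  fixes d :: nat
  assumes "2 ^ d * (2 / 3) \<le> 2 powr (real d / 2) * 2 powr (real d / 6)"
  shows "d \<le> 1"
proof (rule ccontr)
  assume "\<not> d \<le> 1"
  define x :: real where "x = 2 powr (real d / 6)"
  have x_pow: "x ^ k = 2 powr (real k * real d / 6)" for k
    by (simp add: x_def powr_power)
  have x6: "x ^ 6 = 2 ^ d"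
    using x_pow[of 6] by (simp add: powr_realpow)
  have "x ^ 4 * (x ^ 2 * (2 / 3)) = x ^ 6 * (2 / 3)"
    by (simp add: power_numeral_reduce mult_ac)
  also have "\<dots> \<le> x ^ 4 * 1"
    using assms x6 x_pow[of 3] by (simp add: x_def power_numeral_reduce mult_ac)
  finally have "x ^ 2 * (2 / 3) \<le> 1"
    by (rule mult_left_le_imp_le) (simp add: x_def)
  then have "(x ^ 2) ^ 3 \<le> (3 / 2) ^ 3"
    by (intro power_mono) auto
  then have "(2 :: real) ^ d \<le> 27 / 8"
    using x6 by (simp add: power_divide flip: power_mult)
  moreover have "(4 :: real) \<le> 2 ^ d"
    using \<open>\<not> d \<le> 1\<close> power_increasing[of 2 d "2 :: real"] by simp
  ultimately show False
    by simp
qed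

lemma query_count_arith:
  fixes d n T :: nat and K :: real
  assumes success: "2 ^ d * (2 / 3) \<le> K * 2 ^ ((n + 1) * T)"
    and K_le: "K \<le> 2 powr (real d / 2)" and K_small: "d < 10 \<Longrightarrow> K \<le> 1" and "1 \<le> n"
  shows "d \<le> 12 * n * T"
proof (rule ccontr)
  assume "\<not> d \<le> 12 * n * T"
  then have lt: "6 * ((n + 1) * T) < d"
    using \<open>1 \<le> n\<close> mult_right_mono[of "n + 1" "2 * n" T] by linarith
  have "0 < K * 2 ^ ((n + 1) * T)"
    by (rule less_le_trans[OF _ success]) simp
  then have "0 < K"
    by (simp add: zero_less_mult_iff)
  have "(2 :: real) ^ ((n + 1) * T) = 2 powr real ((n + 1) * T)"
    by (rule powr_realpow[symmetric]) simp
  also have "\<dots> \<le> 2 powr (real d / 6)"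
  proof -
    have "6 * real ((n + 1) * T) \<le> real d"
      using lt by (metis less_imp_le of_nat_le_iff of_nat_mult of_nat_numeral)
    then show ?thesis
      by (intro powr_mono) auto
  qed
  finally have "K * 2 ^ ((n + 1) * T) \<le> 2 powr (real d / 2) * 2 powr (real d / 6)"
    using K_le \<open>0 < K\<close> by (intro mult_mono) auto
  then have "d \<le> 1"
    using success by (intro two_power_le_imp_le_1) simp
  then show False
    using lt success K_small by (cases "d = 1") auto
qed

lemma shattered_obtain_labellings:
  assumes "shattered C S"
  obtains cU where "\<And>U. U \<subseteq> S \<Longrightarrow> cU U \<in> C" "\<And>U x. U \<subseteq> S \<Longrightarrow> x \<in> S \<Longrightarrow> cU U x = (x \<in> U)"
proof -
  have "\<forall>U\<in>Pow S. \<exists>c. c \<in> C \<and> {x \<in> S. c x} = U"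
    using assms unfolding shattered_def by blast
  then obtain cU where "\<forall>U\<in>Pow S. cU U \<in> C \<and> {x \<in> S. cU U x} = U"
    by (rule bchoice[THEN exE])
  then show ?thesis
    using that by blast
qed

lemma sum_success_prob_le:
  assumes "n < m" "unitary_on m U0" "\<forall>U\<in>set Us. unitary_on m U"
    and S: "finite S" "S \<noteq> {}" and cU: "\<And>U x. U \<subseteq> S \<Longrightarrow> x \<in> S \<Longrightarrow> cU U x = (x \<in> U)"
  shows "(\<Sum>U\<in>Pow S. success_prob m ms (net_state m U0 Us (QMQ m n (cU U))) decode S (cU U))
    \<le> real (card {E. E \<subseteq> S \<and> 10 * card E \<le> card S}) * 2 ^ ((n + 1) * length Us)"
proof -
  obtain wt where wt: "\<And>i. 0 \<le> wt i" "(\<Sum>i<2 ^ m. wt i) \<le> 2 ^ ((n + 1) * length Us)"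
    "\<And>c i. i < 2 ^ m \<Longrightarrow> (cmod (net_state m U0 Us (QMQ m n c) $ i))\<^sup>2 \<le> wt i"
    using net_state_entry_bound assms(1-3) by blast
  define K where "K = card {E. E \<subseteq> S \<and> 10 * card E \<le> card S}"
  define good where "good U i \<longleftrightarrow>
    (\<exists>h. decode (map (qubit i) ms) = Some h \<and> rel_dist S h (cU U) \<le> 1 / 10)" for U i
  have "(\<Sum>U\<in>Pow S. success_prob m ms (net_state m U0 Us (QMQ m n (cU U))) decode S (cU U))
      = (\<Sum>U\<in>Pow S. \<Sum>i<2 ^ m.
          if good U i then (cmod (net_state m U0 Us (QMQ m n (cU U)) $ i))\<^sup>2 else 0)"
    unfolding success_prob_def sum_out_prob_eq good_def ..
  also have "\<dots> \<le> real K * (\<Sum>i<2 ^ m. wt i)"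
  proof (rule double_counting_le)
    show "card {U \<in> Pow S. good U i} \<le> K" for i
      unfolding good_def K_def using card_close_labelings_le[OF S cU] .
  qed (use S wt in auto)
  also have "\<dots> \<le> real K * 2 ^ ((n + 1) * length Us)"
    using wt(2) by (rule mult_left_mono) simp
  finally show ?thesis
    unfolding K_def .
qed

theorem mainTheorem10:
  fixes n m d :: nat
    and C :: "(bool list \<Rightarrow> bool) set"
    and S :: "bool list set"
    and U0 :: "complex mat" and Us :: "complex mat list"
    and ms :: "nat list"
    and decode :: "bool list \<Rightarrow> (bool list \<Rightarrow> bool) option"
  assumes S_sub: "S \<subseteq> {x. length x = n}"
    and S_card: "card S = d"
    and shat: "shattered C S"
    and reg: "n + 1 \<le> m"
    and U0_unit: "unitary_on m U0"
    and Us_unit: "\<forall>U\<in>set Us. unitary_on m U"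
    and ms_ok: "distinct ms" "\<forall>k\<in>set ms. k < m"
    and learns: "\<forall>c\<in>C. success_prob m ms (net_state m U0 Us (QMQ m n c)) decode S c \<ge> 2/3"
  shows "real (length Us) \<ge> real d / (12 * real n)"
proof (cases "n = 0 \<or> d = 0")
  case True
  then show ?thesis
    by auto
next
  case False
  have S: "finite S" "S \<noteq> {}"
    using S_sub S_card False finite_subset[OF S_sub finite_bool_lists_length] by auto
  obtain cU where cU: "\<And>U. U \<subseteq> S \<Longrightarrow> cU U \<in> C" "\<And>U x. U \<subseteq> S \<Longrightarrow> x \<in> S \<Longrightarrow> cU U x = (x \<in> U)"
    using shattered_obtain_labellings[OF shat] by blast
  have "n < m"
    using reg by simp
  have "2 ^ d * (2 / 3) = (\<Sum>U\<in>Pow S. 2 / 3 :: real)"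
    using S S_card by (simp add: card_Pow)
  also have "\<dots> \<le> (\<Sum>U\<in>Pow S. success_prob m ms (net_state m U0 Us (QMQ m n (cU U))) decode S (cU U))"
    using learns cU(1) by (intro sum_mono) auto
  also have "\<dots> \<le> real (card {E. E \<subseteq> S \<and> 10 * card E \<le> card S}) * 2 ^ ((n + 1) * length Us)"
    using sum_success_prob_le[OF \<open>n < m\<close> U0_unit Us_unit S cU(2)] .
  finally have "d \<le> 12 * n * length Us"
    using query_count_arith card_small_subsets_le[OF S(1)] small_subsets_of_small_set[OF S(1)]
      False S_card
    by auto
  then have "real d \<le> 12 * real n * real (length Us)"
    by (metis of_nat_le_iff of_nat_mult of_nat_numeral)
  then show ?thesis
    using False by (simp add: pos_divide_le_eq mult_ac)
qed

end
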